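(* For any $n\geq1$ and any odd $b\geq1$, the set $R_n(b)$ listed in $\prec$ order (increasing) is a $3$-adjacent Gray code: any two consecutive sequences in the list differ in at most $3$ positions, and these positions are consecutive.
   Context: A restricted growth function of length $n$ is an integer sequence $s_1\ldots s_n$ with $s_1=0$ and $0\leq s_{i+1}\leq \max\{s_j\}_{j=1}^i+1$ for $1\leq i\leq n-1$; $R_n$ is the set of these. For an integer $b\geq1$, $R_n(b)=\{s_1\ldots s_n\in R_n: \max_i s_i\leq b\}$. The Reflected Gray Code Order $\prec$ on length-$n$ sequences of nonnegative integers: $s_1\ldots s_n\prec t_1\ldots t_n$ if, for the smallest $k$ with $s_k\neq t_k$, either $\sum_{i=1}^{k-1}s_i$ is even and $s_k<t_k$, or $\sum_{i=1}^{k-1}s_i$ is odd and $s_k>t_k$. A list of same-length sequences is a $d$-Gray code if the Hamming distance (number of differing positions) between successive sequences is at most $d$; it is a $d$-adjacent Gray code if in addition the positions where successive sequences differ are adjacent. *)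

theory Defs
  imports Main
begin

text \<open>Sequences s_1...s_n are represented as lists of naturals; position i (1-based)
  corresponds to list index i-1.\<close>

definition is_rgf :: "nat \<Rightarrow> nat list \<Rightarrow> bool" where
  "is_rgf n s \<longleftrightarrow> length s = n \<and> n \<ge> 1 \<and> s ! 0 = 0 \<and>
     (\<forall>i. 1 \<le> i \<and> i \<le> n - 1 \<longrightarrow> s ! i \<le> Max (set (take i s)) + 1)"


definition Rb :: "nat \<Rightarrow> nat \<Rightarrow> nat list set" where
  "Rb n b = {s. is_rgf n s \<and> Max (set s) \<le> b}"

definition rgc_less :: "nat list \<Rightarrow> nat list \<Rightarrow> bool" where
  "rgc_less s t \<longleftrightarrow> length s = length t \<and>
     (\<exists>k < length s. take k s = take k t \<and> s ! k \<noteq> t ! k \<and>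
        ((even (sum_list (take k s)) \<and> s ! k < t ! k) \<or>
         (odd (sum_list (take k s)) \<and> s ! k > t ! k)))"

definition diff_pos :: "nat list \<Rightarrow> nat list \<Rightarrow> nat set" where
  "diff_pos s t = {i. i < length s \<and> s ! i \<noteq> t ! i}"

definition adjacent_step :: "nat \<Rightarrow> nat list \<Rightarrow> nat list \<Rightarrow> bool" where
  "adjacent_step d s t \<longleftrightarrow> card (diff_pos s t) \<le> d \<and>
     (\<forall>i j k. i \<in> diff_pos s t \<and> j \<in> diff_pos s t \<and> i \<le> k \<and> k \<le> j \<longrightarrow> k \<in> diff_pos s t)"

definition is_d_adjacent_gray_code :: "nat \<Rightarrow> nat list list \<Rightarrow> bool" where
  "is_d_adjacent_gray_code d L \<longleftrightarrow>
     (\<forall>i. i + 1 < length L \<longrightarrow> adjacent_step d (L ! i) (L ! (i + 1)))"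

end

theory Submission
  imports Defs
begin

text \<open>If \<open>t\<close> directly follows \<open>s\<close> and they first differ at position \<open>k\<close>, then
  their digits at \<open>k\<close> are consecutive (otherwise a sequence branching off at \<open>k\<close>
  with an intermediate digit lies between them), \<open>s\<close> is the largest and \<open>t\<close> the
  smallest completion of its prefix of length \<open>k + 1\<close>. Such an extremal completion
  ends in zeros from position \<open>k + 3\<close> on: once the digit sum has the wrong parity only
  zeros follow, and since \<open>b\<close> is odd, an even maximal digit \<open>v\<close> is followed by
  \<open>v + 1\<close>, which flips the parity. Position \<open>k + 2\<close> is determined by position
  \<open>k + 1\<close> and the common parity, so the differing positions form an interval inside
  \<open>{k, k + 1, k + 2}\<close>.\<close>

text \<open>Meaningful only for \<open>j > 0\<close>; for \<open>j = 0\<close> the maximum is over the empty set.\<close>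

definition max_digit :: "nat \<Rightarrow> nat list \<Rightarrow> nat \<Rightarrow> nat" where
  "max_digit b x j = min b (Max (set (take j x)) + 1)"

lemma Rb_iff: "x \<in> Rb n b \<longleftrightarrow> is_rgf n x \<and> (\<forall>v\<in>set x. v \<le> b)"
proof -
  have "is_rgf n x \<Longrightarrow> set x \<noteq> {}" unfolding is_rgf_def by auto
  then show ?thesis unfolding Rb_def by (auto simp: Max_le_iff)
qed

lemma Rb_length: "x \<in> Rb n b \<Longrightarrow> length x = n"
  by (simp add: Rb_iff is_rgf_def)

lemma Rb_nth_0: "x \<in> Rb n b \<Longrightarrow> x ! 0 = 0"
  by (simp add: Rb_iff is_rgf_def)

lemma Rb_nth_le_max_digit:
  assumes "x \<in> Rb n b" "0 < i" "i < n"
  shows "x ! i \<le> max_digit b x i"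
  using assms by (auto simp: Rb_iff is_rgf_def max_digit_def)

lemma prefix_digit_zeros_in_Rb:
  assumes x: "x \<in> Rb n b" and j: "0 < j" "j < n" and c: "c \<le> max_digit b x j"
  shows "take j x @ c # replicate (n - j - 1) 0 \<in> Rb n b"
proof -
  define u where "u = take j x @ c # replicate (n - j - 1) 0"
  have lx: "length x = n" using x by (rule Rb_length)
  have take_u: "take i u = take i x" if "i \<le> j" for i using that j lx by (simp add: u_def)
  have nth_u: "u ! i = (if i < j then x ! i else if i = j then c else 0)" if "i < n" for i
    using that j lx by (auto simp: u_def nth_append)
  have "is_rgf n u"
    unfolding is_rgf_def
  proof (intro conjI allI impI)
    show "length u = n" using j lx by (simp add: u_def)
    show "1 \<le> n" using j by simp
    show "u ! 0 = 0" using nth_u[of 0] j Rb_nth_0[OF x] by simp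
    fix i assume i: "1 \<le> i \<and> i \<le> n - 1"
    show "u ! i \<le> Max (set (take i u)) + 1"
    proof (cases "i < j")
      case True
      then show ?thesis using nth_u[of i] take_u[of i] i j x by (simp add: Rb_iff is_rgf_def)
    next
      case False
      then show ?thesis using nth_u[of i] take_u[of i] i j c by (auto simp: max_digit_def)
    qed
  qed
  moreover have "\<forall>v\<in>set u. v \<le> b"
    using x c by (auto simp: u_def Rb_iff max_digit_def dest: in_set_takeD)
  ultimately show ?thesis by (simp add: Rb_iff u_def)
qed

lemma rgc_lessI:
  assumes "length x = length y" "k < length x" "take k x = take k y" "x ! k \<noteq> y ! k"
    "even (sum_list (take k x)) \<Longrightarrow> x ! k < y ! k"
    "odd (sum_list (take k x)) \<Longrightarrow> x ! k > y ! k"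
  shows "rgc_less x y"
  unfolding rgc_less_def using assms by blast

lemma rgc_less_asym: "rgc_less x y \<Longrightarrow> \<not> rgc_less y x"
proof
  assume "rgc_less x y" "rgc_less y x"
  then obtain k l where
    k: "take k x = take k y" "x ! k \<noteq> y ! k"
      "(even (sum_list (take k x)) \<and> x ! k < y ! k) \<or> (odd (sum_list (take k x)) \<and> x ! k > y ! k)"
    and l: "take l y = take l x" "y ! l \<noteq> x ! l"
      "(even (sum_list (take l y)) \<and> y ! l < x ! l) \<or> (odd (sum_list (take l y)) \<and> y ! l > x ! l)"
    unfolding rgc_less_def by blast
  show False
  proof (cases k l rule: linorder_cases)
    case less
    then show ?thesis using k l by (metis nth_take)
  next
    case greater
    then show ?thesis using k l by (metis nth_take)
  next
    case equal
    then show ?thesis using k l by auto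
  qed
qed

text \<open>With \<open>p = True\<close> this describes the \<open>\<prec>\<close>-largest, with \<open>p = False\<close> the
  \<open>\<prec>\<close>-smallest member of \<open>Rb n b\<close> extending \<open>take (Suc k) x\<close>.\<close>

definition extremal_tail :: "bool \<Rightarrow> nat \<Rightarrow> nat \<Rightarrow> nat list \<Rightarrow> bool" where
  "extremal_tail p b k x \<longleftrightarrow>
     (\<forall>j. k < j \<and> j < length x \<longrightarrow>
        x ! j = (if even (sum_list (take j x)) = p then max_digit b x j else 0))"

lemma extremal_tail_zeros:
  assumes tail: "extremal_tail p b k x" and "k < j\<^sub>0"
    and parity: "even (sum_list (take j\<^sub>0 x)) \<noteq> p" and "j\<^sub>0 \<le> j" "j < length x"
  shows "x ! j = 0"
proof -
  have zero: "x ! i = 0" if "j\<^sub>0 \<le> i" "i < length x" "even (sum_list (take i x)) \<noteq> p" for i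
    using tail that \<open>k < j\<^sub>0\<close> by (simp add: extremal_tail_def)
  have "even (sum_list (take j x)) \<noteq> p" using \<open>j\<^sub>0 \<le> j\<close> \<open>j < length x\<close>
  proof (induction j rule: dec_induct)
    case base
    show ?case by (fact parity)
  next
    case (step i)
    then show ?case using zero[of i] by (simp add: take_Suc_conv_app_nth)
  qed
  then show ?thesis using zero assms by blast
qed

lemma Max_set_snoc: "xs \<noteq> [] \<Longrightarrow> Max (set (xs @ [c])) = max (Max (set xs)) c"
  by (simp add: Max_insert max.commute)

lemma extremal_tail_shape:
  fixes p :: bool and b k :: nat and x :: "nat list"
  defines "q \<equiv> (even (sum_list (take (Suc k) x)) = p)"
  assumes tail: "extremal_tail p b k x" and "odd b"
  shows "Suc (Suc k) < length x \<Longrightarrow>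
           x ! Suc (Suc k) = (if q \<and> even (x ! Suc k) then x ! Suc k + 1 else 0)"
    and "Suc (Suc k) < j \<Longrightarrow> j < length x \<Longrightarrow> x ! j = 0"
proof -
  define v where "v = max_digit b x (Suc k)"
  have digit: "x ! j = (if even (sum_list (take j x)) = p then max_digit b x j else 0)"
    if "k < j" "j < length x" for j
    using tail that by (simp add: extremal_tail_def)
  have zeros: "x ! j = 0" if "k < j\<^sub>0" "even (sum_list (take j\<^sub>0 x)) \<noteq> p" "j\<^sub>0 \<le> j" "j < length x"
    for j j\<^sub>0 using extremal_tail_zeros[OF tail] that by blast
  have take2: "take (Suc (Suc k)) x = take (Suc k) x @ [x ! Suc k]" if "Suc k < length x"
    using that by (simp add: take_Suc_conv_app_nth)
  have x1: "x ! Suc k = (if q then v else 0)" if "Suc k < length x"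
    using digit[of "Suc k"] that by (simp add: q_def v_def)
  have "x ! Suc (Suc k) = (if q \<and> even (x ! Suc k) then x ! Suc k + 1 else 0) \<and>
        (\<forall>j. Suc (Suc k) < j \<and> j < length x \<longrightarrow> x ! j = 0)" if len: "Suc (Suc k) < length x"
  proof (cases "q \<and> even v")
    case True
    have "v \<noteq> b" using True \<open>odd b\<close> by auto
    then have v: "v = Max (set (take (Suc k) x)) + 1" "v < b"
      by (auto simp: v_def max_digit_def min_def split: if_splits)
    have "take (Suc k) x \<noteq> []" using len by (cases x) auto
    then have "Max (set (take (Suc (Suc k)) x)) = v"
      using len v(1) x1 True by (simp only: take2 Max_set_snoc) simp
    then have x2: "x ! Suc (Suc k) = v + 1"
      using digit[of "Suc (Suc k)"] len x1 True v(2) by (simp add: take2 q_def max_digit_def)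
    have "even (sum_list (take (Suc (Suc (Suc k))) x)) \<noteq> p"
      using len x1 x2 True by (simp add: take_Suc_conv_app_nth take2 q_def)
    then show ?thesis using x1 x2 True len zeros[of "Suc (Suc (Suc k))"] by auto
  next
    case False
    then have "even (sum_list (take (Suc (Suc k)) x)) \<noteq> p"
      using len x1 by (auto simp: take2 q_def)
    then show ?thesis using x1 False len zeros[of "Suc (Suc k)"] by auto
  qed
  then show "Suc (Suc k) < length x \<Longrightarrow>
           x ! Suc (Suc k) = (if q \<and> even (x ! Suc k) then x ! Suc k + 1 else 0)"
    and "Suc (Suc k) < j \<Longrightarrow> j < length x \<Longrightarrow> x ! j = 0"
    by auto
qed

locale rgc_cover =
  fixes n b k :: nat and s t :: "nat list"
  assumes s_in: "s \<in> Rb n b" and t_in: "t \<in> Rb n b"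
    and first_diff: "k < n" "take k s = take k t" "s ! k \<noteq> t ! k"
    and order: "even (sum_list (take k s)) \<Longrightarrow> s ! k < t ! k"
      "odd (sum_list (take k s)) \<Longrightarrow> t ! k < s ! k"
    and nothing_between: "\<And>u. u \<in> Rb n b \<Longrightarrow> rgc_less s u \<Longrightarrow> rgc_less u t \<Longrightarrow> False"
begin

lemma length_s: "length s = n" and length_t: "length t = n"
  using s_in t_in by (auto intro: Rb_length)

lemma first_diff_pos: "0 < k"
  using first_diff(3) Rb_nth_0[OF s_in] Rb_nth_0[OF t_in] by (cases k) auto

lemma first_diff_digits_consecutive: "s ! k + 1 = t ! k \<or> t ! k + 1 = s ! k"
proof (rule ccontr)
  assume gap: "\<not> ?thesis"
  define c where "c = min (s ! k) (t ! k) + 1"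
  have "max_digit b t k = max_digit b s k" using first_diff(2) by (simp add: max_digit_def)
  then have c: "c \<le> max_digit b t k" "min (s ! k) (t ! k) < c" "c < max (s ! k) (t ! k)"
    using gap first_diff(3) Rb_nth_le_max_digit[OF s_in first_diff_pos first_diff(1)]
      Rb_nth_le_max_digit[OF t_in first_diff_pos first_diff(1)]
    by (auto simp: c_def)
  define u where "u = take k t @ c # replicate (n - k - 1) 0"
  have "u \<in> Rb n b"
    unfolding u_def using t_in first_diff_pos first_diff(1) c(1) by (rule prefix_digit_zeros_in_Rb)
  moreover have "rgc_less s u"
    by (rule rgc_lessI[where k = k])
      (use first_diff length_s length_t order c in \<open>auto simp: u_def nth_append\<close>)
  moreover have "rgc_less u t"
    by (rule rgc_lessI[where k = k])
      (use first_diff length_s length_t order c in \<open>auto simp: u_def nth_append\<close>)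
  ultimately show False by (rule nothing_between)
qed

lemma extremal_tail_s: "extremal_tail True b k s"
  unfolding extremal_tail_def
proof (intro allI impI, rule ccontr)
  fix j assume j: "k < j \<and> j < length s"
  define g where "g = (if even (sum_list (take j s)) = True then max_digit b s j else 0)"
  assume "s ! j \<noteq> g"
  define u where "u = take j s @ g # replicate (n - j - 1) 0"
  have "u \<in> Rb n b"
    unfolding u_def using s_in _ _ _ by (rule prefix_digit_zeros_in_Rb) (use j length_s in \<open>auto simp: g_def\<close>)
  moreover have "rgc_less s u"
    by (rule rgc_lessI[where k = j])
      (use j length_s \<open>s ! j \<noteq> g\<close> Rb_nth_le_max_digit[OF s_in, of j] first_diff_pos
        in \<open>auto simp: u_def nth_append g_def\<close>)
  moreover have "rgc_less u t"
    by (rule rgc_lessI[where k = k])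
      (use j first_diff length_s length_t order in \<open>auto simp: u_def nth_append\<close>)
  ultimately show False by (rule nothing_between)
qed

lemma extremal_tail_t: "extremal_tail False b k t"
  unfolding extremal_tail_def
proof (intro allI impI, rule ccontr)
  fix j assume j: "k < j \<and> j < length t"
  define g where "g = (if even (sum_list (take j t)) = False then max_digit b t j else 0)"
  assume "t ! j \<noteq> g"
  define u where "u = take j t @ g # replicate (n - j - 1) 0"
  have "u \<in> Rb n b"
    unfolding u_def using t_in _ _ _ by (rule prefix_digit_zeros_in_Rb) (use j length_t in \<open>auto simp: g_def\<close>)
  moreover have "rgc_less s u"
    by (rule rgc_lessI[where k = k])
      (use j first_diff length_s length_t order in \<open>auto simp: u_def nth_append\<close>)
  moreover have "rgc_less u t"
    by (rule rgc_lessI[where k = j])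
      (use j length_t \<open>t ! j \<noteq> g\<close> Rb_nth_le_max_digit[OF t_in, of j] first_diff_pos
        in \<open>auto simp: u_def nth_append g_def\<close>)
  ultimately show False by (rule nothing_between)
qed

lemma adjacent_step_3:
  assumes "odd b"
  shows "adjacent_step 3 s t"
proof -
  have sum_take_Suc: "sum_list (take (Suc k) x) = sum_list (take k s) + x ! k"
    if "x \<in> {s, t}" for x
    using that first_diff length_s length_t by (auto simp: take_Suc_conv_app_nth)
  have same_parity: "even (sum_list (take (Suc k) s)) \<longleftrightarrow> odd (sum_list (take (Suc k) t))"
  proof -
    have "even (s ! k) \<longleftrightarrow> odd (t ! k)"
      using first_diff_digits_consecutive by (metis even_Suc Suc_eq_plus1)
    then show ?thesis by (simp add: sum_take_Suc)
  qed
  note shape_s = extremal_tail_shape[OF extremal_tail_s \<open>odd b\<close>]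
  note shape_t = extremal_tail_shape[OF extremal_tail_t \<open>odd b\<close>]
  define D where "D = diff_pos s t"
  have D: "i \<in> D \<longleftrightarrow> i < n \<and> s ! i \<noteq> t ! i" for i
    using length_s by (simp add: D_def diff_pos_def)
  have D_sub: "D \<subseteq> {k, Suc k, Suc (Suc k)}"
  proof
    fix i assume "i \<in> D"
    then have "i < n" "s ! i \<noteq> t ! i" by (auto simp: D)
    moreover have "\<not> i < k" using \<open>s ! i \<noteq> t ! i\<close> first_diff(2) by (metis nth_take)
    moreover have "\<not> Suc (Suc k) < i"
      using shape_s(2)[of i] shape_t(2)[of i] \<open>i < n\<close> \<open>s ! i \<noteq> t ! i\<close> length_s length_t
      by auto
    ultimately show "i \<in> {k, Suc k, Suc (Suc k)}" by auto
  qed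
  have k_in: "k \<in> D" using first_diff by (simp add: D)
  have Suc_k_in: "Suc k \<in> D" if "Suc (Suc k) \<in> D"
  proof -
    from that have n: "Suc (Suc k) < n" and "s ! Suc (Suc k) \<noteq> t ! Suc (Suc k)" by (auto simp: D)
    moreover have "s ! Suc (Suc k) = t ! Suc (Suc k)" if "s ! Suc k = t ! Suc k"
      using shape_s(1) shape_t(1) same_parity length_s length_t n that by simp
    ultimately have "s ! Suc k \<noteq> t ! Suc k" by blast
    with n show ?thesis by (simp add: D)
  qed
  have interval: "\<forall>i j l. i \<in> D \<and> j \<in> D \<and> i \<le> l \<and> l \<le> j \<longrightarrow> l \<in> D"
  proof (intro allI impI)
    fix i j l assume ijl: "i \<in> D \<and> j \<in> D \<and> i \<le> l \<and> l \<le> j"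
    then have "i \<in> {k, Suc k, Suc (Suc k)}" "j \<in> {k, Suc k, Suc (Suc k)}" using D_sub by auto
    then show "l \<in> D" using ijl k_in Suc_k_in by (auto simp: le_Suc_eq)
  qed
  have "card D \<le> 3"
    using card_mono[OF _ D_sub] by (simp add: card_insert_if)
  with interval show ?thesis unfolding adjacent_step_def D_def by blast
qed

end

lemma sorted_wrt_nothing_between_neighbours:
  assumes sorted: "sorted_wrt R xs" and asym: "\<And>x y. R x y \<Longrightarrow> \<not> R y x"
    and "Suc i < length xs" "u \<in> set xs" "R (xs ! i) u" "R u (xs ! Suc i)"
  shows False
proof -
  have R_nth: "R (xs ! p) (xs ! q)" if "p < q" "q < length xs" for p q
    using sorted that by (simp add: sorted_wrt_iff_nth_less)
  obtain j where j: "j < length xs" "u = xs ! j" using \<open>u \<in> set xs\<close> by (metis in_set_conv_nth)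
  consider "j < i" | "j = i" | "j = Suc i" | "Suc i < j" by linarith
  then show False
    by cases (use assms j R_nth[of j i] R_nth[of "Suc i" j] in \<open>auto dest: asym\<close>)
qed

theorem theorem1:
  fixes n b :: nat and L :: "nat list list"
  assumes "n \<ge> 1" and "b \<ge> 1" and "odd b"
    and "set L = Rb n b" and "sorted_wrt rgc_less L"
  shows "is_d_adjacent_gray_code 3 L"
  unfolding is_d_adjacent_gray_code_def
proof (intro allI impI)
  fix i assume i: "i + 1 < length L"
  have in_Rb: "L ! i \<in> Rb n b" "L ! (i + 1) \<in> Rb n b"
    using i assms(4) nth_mem[of i L] nth_mem[of "i + 1" L] by auto
  have "rgc_less (L ! i) (L ! (i + 1))"
    using assms(5) i by (simp add: sorted_wrt_iff_nth_less)
  then obtain k where "k < n" "take k (L ! i) = take k (L ! (i + 1))" "L ! i ! k \<noteq> L ! (i + 1) ! k"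
    "(even (sum_list (take k (L ! i))) \<and> L ! i ! k < L ! (i + 1) ! k) \<or>
     (odd (sum_list (take k (L ! i))) \<and> L ! (i + 1) ! k < L ! i ! k)"
    using Rb_length[OF in_Rb(1)] unfolding rgc_less_def by auto
  then interpret rgc_cover n b k "L ! i" "L ! (i + 1)"
    using in_Rb sorted_wrt_nothing_between_neighbours[OF assms(5) rgc_less_asym, of i] i assms(4)
    by unfold_locales auto
  show "adjacent_step 3 (L ! i) (L ! (i + 1))" using \<open>odd b\<close> by (rule adjacent_step_3)
qed

end
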